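(* Let $t_1e_{\gamma_1},\dots,t_se_{\gamma_s}$ (with $t_i\in\mathbb{T}^n$, $\gamma_i\in\{1,\dots,r\}$) and $c_1,\dots,c_s\in K\setminus\{0\}$ be given, and let $\Sigma''$ be the set of critical syzygies obtained by applying Rules 1 and 2 below. Then the set $\widetilde{\Sigma}=\{-c_j\cdot\sigma_{ij}\mid \sigma_{ij}\in\Sigma''\}$ is the reduced $\tau$-Gröbner basis of the module $\mathrm{Syz}_P(c_1t_1e_{\gamma_1},\dots,c_st_se_{\gamma_s})$.
   Context: $K$ is a field, $P=K[x_1,\dots,x_n]$ is positively graded by $W\in\mathrm{Mat}_{m,n}(\mathbb{Z})$ (i.e. $\deg_W(x_1^{\alpha_1}\cdots x_n^{\alpha_n})=W\cdot(\alpha_1,\dots,\alpha_n)^{\mathrm{tr}}$, $\mathrm{rk}(W)=m$, no zero column, first non-zero entry of each column positive), $\mathbb{T}^n$ is the set of terms of $P$, $F=\bigoplus_{i=1}^rP(-\delta_i)$ has basis $e_1,\dots,e_r$, and $\sigma$ is a module term ordering on $\mathbb{T}^n\langle e_1,\dots,e_r\rangle$. Let $d_i=\deg_W(t_ie_{\gamma_i})=\deg_W(t_i)+\delta_{\gamma_i}$ and $F'=\bigoplus_{i=1}^sP(-d_i)$ with canonical basis $\epsilon_1,\dots,\epsilon_s$. $\mathrm{Syz}_P(c_1t_1e_{\gamma_1},\dots,c_st_se_{\gamma_s})$ is the submodule of $F'$ of all $\sum f_i\epsilon_i$ with $\sum f_ic_it_ie_{\gamma_i}=0$. The ordering $\tau$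 on $\mathbb{T}^n\langle\epsilon_1,\dots,\epsilon_s\rangle$ is defined by $t\epsilon_i\ge_\tau t'\epsilon_j$ iff $tt_ie_{\gamma_i}>_\sigma t't_je_{\gamma_j}$, or $tt_ie_{\gamma_i}=t't_je_{\gamma_j}$ and $i\ge j$; it is a module term ordering. For $i,j$ with $\gamma_i=\gamma_j$ let $\sigma_{ij}=\frac{\mathrm{lcm}(t_i,t_j)}{c_it_i}\epsilon_i-\frac{\mathrm{lcm}(t_i,t_j)}{c_jt_j}\epsilon_j$ and $t_{ij}=\mathrm{lcm}(t_i,t_j)/t_i$. $\Sigma=\{\sigma_{ij}\mid 1\le i<j\le s,\ \gamma_i=\gamma_j\}$ is the set of critical syzygies. Rule 1: delete from $\Sigma$ all $\sigma_{jk}$ for which there is an index $i\in\{1,\dots,j-1\}$ (with $\gamma_i=\gamma_k$) such that $t_{ki}$ divides $t_{kj}$; call the result $\Sigma'$. Rule 2: delete from $\Sigma'$ all $\sigma_{ik}$ for which there is an index $j\in\{i+1,\dots,k-1\}$ (with $\gamma_j=\gamma_k$) such that $t_{kj}$ properly divides $t_{ki}$; call the result $\Sigma''$. *)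

theory Defs
  imports Main
begin

(* Terms of P = K[x_1..x_n] are exponent vectors  nat => nat  (variable x_{k+1}
   corresponds to index k); a term is valid iff all exponents at indices >= n vanish. *)

definition valid_term :: "nat \<Rightarrow> (nat \<Rightarrow> nat) \<Rightarrow> bool" where
  "valid_term n t \<longleftrightarrow> (\<forall>x\<ge>n. t x = 0)"

definition tmul :: "(nat \<Rightarrow> nat) \<Rightarrow> (nat \<Rightarrow> nat) \<Rightarrow> (nat \<Rightarrow> nat)" where
  "tmul t u = (\<lambda>x. t x + u x)"

definition tdvd :: "(nat \<Rightarrow> nat) \<Rightarrow> (nat \<Rightarrow> nat) \<Rightarrow> bool" where
  "tdvd t u \<longleftrightarrow> (\<forall>x. t x \<le> u x)"

(* quotient u / t (meaningful when t divides u) *)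
definition tquot :: "(nat \<Rightarrow> nat) \<Rightarrow> (nat \<Rightarrow> nat) \<Rightarrow> (nat \<Rightarrow> nat)" where
  "tquot u t = (\<lambda>x. u x - t x)"

definition tlcm :: "(nat \<Rightarrow> nat) \<Rightarrow> (nat \<Rightarrow> nat) \<Rightarrow> (nat \<Rightarrow> nat)" where
  "tlcm t u = (\<lambda>x. max (t x) (u x))"

definition tone :: "nat \<Rightarrow> nat" where
  "tone = (\<lambda>x. 0)"

(* Module terms t e_k are pairs (t, k). *)
type_synonym mterm = "(nat \<Rightarrow> nat) \<times> nat"

definition mdvd :: "mterm \<Rightarrow> mterm \<Rightarrow> bool" where
  "mdvd a b \<longleftrightarrow> snd a = snd b \<and> tdvd (fst a) (fst b)"

definition mterms :: "nat \<Rightarrow> nat \<Rightarrow> mterm set" where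
  "mterms n r = {(t, k). valid_term n t \<and> k \<in> {1..r}}"

definition module_term_ordering :: "nat \<Rightarrow> nat \<Rightarrow> (mterm \<Rightarrow> mterm \<Rightarrow> bool) \<Rightarrow> bool" where
  "module_term_ordering n r le \<longleftrightarrow>
     (\<forall>a\<in>mterms n r. le a a) \<and>
     (\<forall>a\<in>mterms n r. \<forall>b\<in>mterms n r. le a b \<and> le b a \<longrightarrow> a = b) \<and>
     (\<forall>a\<in>mterms n r. \<forall>b\<in>mterms n r. \<forall>c\<in>mterms n r. le a b \<and> le b c \<longrightarrow> le a c) \<and>
     (\<forall>a\<in>mterms n r. \<forall>b\<in>mterms n r. le a b \<or> le b a) \<and>
     (\<forall>a\<in>mterms n r. \<forall>b\<in>mterms n r. \<forall>t. valid_term n t \<longrightarrow> le a b \<longrightarrow>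
         le (tmul t (fst a), snd a) (tmul t (fst b), snd b)) \<and>
     (\<forall>a\<in>mterms n r. le (tone, snd a) a)"

definition tau_le :: "(mterm \<Rightarrow> mterm \<Rightarrow> bool) \<Rightarrow> (nat \<Rightarrow> nat \<Rightarrow> nat) \<Rightarrow> (nat \<Rightarrow> nat)
    \<Rightarrow> mterm \<Rightarrow> mterm \<Rightarrow> bool" where
  "tau_le le t gam a b \<longleftrightarrow>
     (let A = (tmul (fst a) (t (snd a)), gam (snd a));
          B = (tmul (fst b) (t (snd b)), gam (snd b))
      in (le A B \<and> A \<noteq> B) \<or> (A = B \<and> snd a \<le> snd b))"

(* Elements of F' = (+)_{i=1..s} P(-d_i): maps m from module terms (u, i) to coefficients;
   m (u, i) is the coefficient of u eps_i. *)
definition in_Fprime :: "nat \<Rightarrow> nat \<Rightarrow> (mterm \<Rightarrow> 'a::zero) \<Rightarrow> bool" where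
  "in_Fprime n s m \<longleftrightarrow> finite {v. m v \<noteq> 0} \<and>
     (\<forall>u i. m (u, i) \<noteq> 0 \<longrightarrow> valid_term n u \<and> i \<in> {1..s})"

(* Syz_P(c_1 t_1 e_{gamma_1}, ..., c_s t_s e_{gamma_s}): the coefficient of u e_k in
   sum_i m_i c_i t_i e_{gamma_i} must vanish for all u, k. *)
definition Syz :: "nat \<Rightarrow> nat \<Rightarrow> (nat \<Rightarrow> nat \<Rightarrow> nat) \<Rightarrow> (nat \<Rightarrow> nat) \<Rightarrow> (nat \<Rightarrow> 'a::field)
    \<Rightarrow> (mterm \<Rightarrow> 'a) set" where
  "Syz n s t gam c = {m. in_Fprime n s m \<and>
     (\<forall>u k. (\<Sum>i\<in>{i\<in>{1..s}. gam i = k \<and> tdvd (t i) u}. m (tquot u (t i), i) * c i) = 0)}"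

definition LT :: "(mterm \<Rightarrow> mterm \<Rightarrow> bool) \<Rightarrow> (mterm \<Rightarrow> 'a::zero) \<Rightarrow> mterm" where
  "LT tle m = (THE v. m v \<noteq> 0 \<and> (\<forall>w. m w \<noteq> 0 \<longrightarrow> tle w v))"

definition LC :: "(mterm \<Rightarrow> mterm \<Rightarrow> bool) \<Rightarrow> (mterm \<Rightarrow> 'a::zero) \<Rightarrow> 'a" where
  "LC tle m = m (LT tle m)"

definition is_GB :: "(mterm \<Rightarrow> mterm \<Rightarrow> bool) \<Rightarrow> (mterm \<Rightarrow> 'a::zero) set \<Rightarrow> (mterm \<Rightarrow> 'a) set \<Rightarrow> bool" where
  "is_GB tle M G \<longleftrightarrow> finite G \<and> G \<subseteq> M \<and> (\<forall>g\<in>G. g \<noteq> (\<lambda>_. 0)) \<and>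
     (\<forall>m\<in>M. m \<noteq> (\<lambda>_. 0) \<longrightarrow> (\<exists>g\<in>G. mdvd (LT tle g) (LT tle m)))"

definition in_LT_module :: "(mterm \<Rightarrow> mterm \<Rightarrow> bool) \<Rightarrow> (mterm \<Rightarrow> 'a::zero) set \<Rightarrow> mterm \<Rightarrow> bool" where
  "in_LT_module tle M v \<longleftrightarrow> (\<exists>m\<in>M. m \<noteq> (\<lambda>_. 0) \<and> mdvd (LT tle m) v)"

(* Reduced Groebner basis (Kreuzer-Robbiano Def. 2.4.12): Groebner basis, monic,
   leading terms form a minimal system of generators of LT(M), and
   Supp(g - LT(g)) \<inter> LT(M) = {} for every g. *)
definition is_reduced_GB :: "(mterm \<Rightarrow> mterm \<Rightarrow> bool) \<Rightarrow> (mterm \<Rightarrow> 'a::field) set \<Rightarrow> (mterm \<Rightarrow> 'a) set \<Rightarrow> bool" where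
  "is_reduced_GB tle M G \<longleftrightarrow> is_GB tle M G \<and>
     (\<forall>g\<in>G. LC tle g = 1) \<and>
     (\<forall>g\<in>G. \<forall>g'\<in>G. g \<noteq> g' \<longrightarrow> \<not> mdvd (LT tle g') (LT tle g)) \<and>
     (\<forall>g\<in>G. \<forall>v. g v \<noteq> 0 \<and> v \<noteq> LT tle g \<longrightarrow> \<not> in_LT_module tle M v)"

definition tij :: "(nat \<Rightarrow> nat \<Rightarrow> nat) \<Rightarrow> nat \<Rightarrow> nat \<Rightarrow> (nat \<Rightarrow> nat)" where
  "tij t i j = tquot (tlcm (t i) (t j)) (t i)"

(* critical syzygy sigma_{ij} = lcm(t_i,t_j)/(c_i t_i) eps_i - lcm(t_i,t_j)/(c_j t_j) eps_j *)
definition crit_syz :: "(nat \<Rightarrow> nat \<Rightarrow> nat) \<Rightarrow> (nat \<Rightarrow> 'a::field) \<Rightarrow> nat \<Rightarrow> nat \<Rightarrow> (mterm \<Rightarrow> 'a)" where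
  "crit_syz t c i j = (\<lambda>(u, k).
     (if k = i \<and> u = tij t i j then 1 / c i else 0) - (if k = j \<and> u = tij t j i then 1 / c j else 0))"

definition rule1_del :: "(nat \<Rightarrow> nat \<Rightarrow> nat) \<Rightarrow> (nat \<Rightarrow> nat) \<Rightarrow> nat \<Rightarrow> nat \<Rightarrow> bool" where
  "rule1_del t gam j k \<longleftrightarrow> (\<exists>i\<in>{1..<j}. gam i = gam k \<and> tdvd (tij t k i) (tij t k j))"

definition rule2_del :: "(nat \<Rightarrow> nat \<Rightarrow> nat) \<Rightarrow> (nat \<Rightarrow> nat) \<Rightarrow> nat \<Rightarrow> nat \<Rightarrow> bool" where
  "rule2_del t gam i k \<longleftrightarrow>
     (\<exists>j\<in>{i<..<k}. gam j = gam k \<and> tdvd (tij t k j) (tij t k i) \<and> tij t k j \<noteq> tij t k i)"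

definition Sigma0 :: "nat \<Rightarrow> (nat \<Rightarrow> nat) \<Rightarrow> (nat \<times> nat) set" where
  "Sigma0 s gam = {(i, j). 1 \<le> i \<and> i < j \<and> j \<le> s \<and> gam i = gam j}"

definition Sigma1 :: "nat \<Rightarrow> (nat \<Rightarrow> nat \<Rightarrow> nat) \<Rightarrow> (nat \<Rightarrow> nat) \<Rightarrow> (nat \<times> nat) set" where
  "Sigma1 s t gam = {(j, k) \<in> Sigma0 s gam. \<not> rule1_del t gam j k}"

definition Sigma2 :: "nat \<Rightarrow> (nat \<Rightarrow> nat \<Rightarrow> nat) \<Rightarrow> (nat \<Rightarrow> nat) \<Rightarrow> (nat \<times> nat) set" where
  "Sigma2 s t gam = {(i, k) \<in> Sigma1 s t gam. \<not> rule2_del t gam i k}"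

end

theory Submission
  imports Defs "HOL-Library.Product_Lexorder"
begin

(* Let u eps_k be the tau-leading term of a nonzero syzygy m.  In the coefficient
   of u t_k e_gamma_k in sum_i m_i c_i t_i e_gamma_i, the contribution of
   m_k must cancel against that of some m_j with j /= k; since tau breaks ties by
   the index, j < k, and then t_kj divides u.  Hence LT(Syz) is generated by the
   leading terms t_ki eps_k (i < k, gamma_i = gamma_k) of -c_k sigma_ik, and
   Rules 1 and 2 keep exactly one index i for each minimal t_ki, namely the
   smallest one.  The other term t_ik eps_i of -c_k sigma_ik would lie in LT(Syz)
   only if some j < i had t_ij | t_ik, i.e. t_kj | t_ki, which Rule 1 excludes. *)

lemma tdvd_iff_le: "tdvd a b \<longleftrightarrow> a \<le> b"
  by (simp add: tdvd_def le_fun_def)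

lemma tmul_tquot: "tdvd b a \<Longrightarrow> tmul (tquot a b) b = a"
  by (auto simp: tmul_def tquot_def tdvd_def fun_eq_iff)

lemma tquot_tmul [simp]: "tquot (tmul u b) b = u"
  by (simp add: tmul_def tquot_def)

lemma tmul_right_cancel: "tmul u b = tmul v b \<longleftrightarrow> u = v"
  by (auto simp: tmul_def fun_eq_iff)

lemma tquot_eq_iff: "tdvd b u \<Longrightarrow> tquot u b = v \<longleftrightarrow> u = tmul v b"
  unfolding tdvd_def tquot_def tmul_def fun_eq_iff by (metis add_diff_cancel_right' le_add_diff_inverse2)

lemma tdvd_tmul_right: "tdvd b (tmul u b)"
  by (simp add: tdvd_def tmul_def)

lemma tdvd_tlcm1: "tdvd a (tlcm a b)"
  by (simp add: tdvd_def tlcm_def)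

lemma tdvd_tlcm2: "tdvd b (tlcm a b)"
  by (simp add: tdvd_def tlcm_def)

lemma tlcm_commute: "tlcm a b = tlcm b a"
  by (simp add: tlcm_def max.commute)

lemma valid_term_tmul: "valid_term n a \<Longrightarrow> valid_term n b \<Longrightarrow> valid_term n (tmul a b)"
  by (simp add: valid_term_def tmul_def)

lemma valid_term_tij: "valid_term n (t i) \<Longrightarrow> valid_term n (t k) \<Longrightarrow> valid_term n (tij t i k)"
  by (simp add: valid_term_def tij_def tquot_def tlcm_def)

lemma tmul_tij: "tmul (tij t i k) (t i) = tlcm (t i) (t k)"
  by (auto simp: tij_def tmul_def tquot_def tlcm_def fun_eq_iff)

lemma tdvd_tmul_iff_tdvd_tij: "tdvd (t i) (tmul u (t k)) \<longleftrightarrow> tdvd (tij t k i) u"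
  unfolding tdvd_def tij_def tmul_def tquot_def tlcm_def by (intro iff_allI) linarith

lemma tdvd_tij_iff: "tdvd (tij t k j) (tij t k i) \<longleftrightarrow> tdvd (t j) (tlcm (t k) (t i))"
  unfolding tdvd_def tij_def tquot_def tlcm_def by (intro iff_allI) linarith

lemma LT_eqI:
  assumes "m v \<noteq> 0" "\<And>w. m w \<noteq> 0 \<Longrightarrow> tle w v" "\<And>w. m w \<noteq> 0 \<Longrightarrow> tle v w \<Longrightarrow> w = v"
  shows "LT tle m = v"
  unfolding LT_def by (rule the_equality) (use assms in blast)+

(* The image u t_i e_gamma_i of u eps_i in F. *)
definition lift_term :: "(nat \<Rightarrow> nat \<Rightarrow> nat) \<Rightarrow> (nat \<Rightarrow> nat) \<Rightarrow> mterm \<Rightarrow> mterm" where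
  "lift_term t gam a = (tmul (fst a) (t (snd a)), gam (snd a))"

lemma tau_le_iff:
  "tau_le le t gam a b \<longleftrightarrow>
     (le (lift_term t gam a) (lift_term t gam b) \<and> lift_term t gam a \<noteq> lift_term t gam b) \<or>
     (lift_term t gam a = lift_term t gam b \<and> snd a \<le> snd b)"
  by (simp add: tau_le_def lift_term_def Let_def)

lemma tau_le_refl: "tau_le le t gam a a"
  by (simp add: tau_le_def)

lemma lift_term_eq_imp_eq: "lift_term t gam a = lift_term t gam b \<Longrightarrow> snd a = snd b \<Longrightarrow> a = b"
  by (cases a; cases b) (simp add: lift_term_def tmul_right_cancel)

definition monic_crit_syz :: "(nat \<Rightarrow> nat \<Rightarrow> nat) \<Rightarrow> (nat \<Rightarrow> 'a::field) \<Rightarrow> nat \<Rightarrow> nat \<Rightarrow> mterm \<Rightarrow> 'a" where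
  "monic_crit_syz t c i k = (\<lambda>v. - c k * crit_syz t c i k v)"

lemma monic_crit_syz_nonzeroD:
  "monic_crit_syz t c i k v \<noteq> 0 \<Longrightarrow> v = (tij t i k, i) \<or> v = (tij t k i, k)"
  unfolding monic_crit_syz_def crit_syz_def by (cases v) (auto split: if_splits)

lemma monic_crit_syz_lead_coeff: "i \<noteq> k \<Longrightarrow> c k \<noteq> 0 \<Longrightarrow> monic_crit_syz t c i k (tij t k i, k) = 1"
  by (simp add: monic_crit_syz_def crit_syz_def)

lemma in_Fprime_monic_crit_syz:
  assumes "1 \<le> i" "i < k" "k \<le> s" "valid_term n (t i)" "valid_term n (t k)"
  shows "in_Fprime n s (monic_crit_syz t c i k)"
  unfolding in_Fprime_def
proof (intro conjI allI impI)
  have "{v. monic_crit_syz t c i k v \<noteq> 0} \<subseteq> {(tij t i k, i), (tij t k i, k)}"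
    using monic_crit_syz_nonzeroD by blast
  then show "finite {v. monic_crit_syz t c i k v \<noteq> 0}"
    by (rule finite_subset) simp
  fix u j assume "monic_crit_syz t c i k (u, j) \<noteq> 0"
  then have "(u, j) = (tij t i k, i) \<or> (u, j) = (tij t k i, k)"
    by (rule monic_crit_syz_nonzeroD)
  then show "valid_term n u" "j \<in> {1..s}"
    using assms by (auto intro: valid_term_tij)
qed

lemma monic_crit_syz_times_coeff:
  assumes "tdvd (t j) u" "i \<noteq> k" "c i \<noteq> 0"
  shows "monic_crit_syz t c i k (tquot u (t j), j) * c j =
    (if j = i then (if u = tlcm (t i) (t k) then - c k else 0) else 0) +
    (if j = k then (if u = tlcm (t i) (t k) then c k else 0) else 0)"
proof -
  have "tquot u (t j) = tij t i k \<longleftrightarrow> u = tmul (tij t i k) (t j)"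
    and "tquot u (t j) = tij t k i \<longleftrightarrow> u = tmul (tij t k i) (t j)"
    using assms(1) by (simp_all add: tquot_eq_iff)
  moreover have "tmul (tij t i k) (t i) = tlcm (t i) (t k)" "tmul (tij t k i) (t k) = tlcm (t i) (t k)"
    by (simp_all add: tmul_tij tlcm_commute)
  ultimately show ?thesis
    using assms(2,3) unfolding monic_crit_syz_def crit_syz_def by (auto simp: field_simps)
qed

lemma monic_crit_syz_in_Syz:
  assumes ik: "1 \<le> i" "i < k" "k \<le> s" "gam i = gam k"
    and valid: "valid_term n (t i)" "valid_term n (t k)" and nonzero: "c i \<noteq> 0"
  shows "monic_crit_syz t c i k \<in> Syz n s t gam c"
  unfolding Syz_def
proof (intro CollectI conjI allI)
  show "in_Fprime n s (monic_crit_syz t c i k)"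
    using ik(1-3) valid by (rule in_Fprime_monic_crit_syz)
  fix u K
  define I where "I = {j\<in>{1..s}. gam j = K \<and> tdvd (t j) u}"
  define L where "L = tlcm (t i) (t k)"
  have "(\<Sum>j\<in>I. monic_crit_syz t c i k (tquot u (t j), j) * c j) =
      (\<Sum>j\<in>I. (if j = i then (if u = L then - c k else 0) else 0) +
               (if j = k then (if u = L then c k else 0) else 0))"
    using ik(2) nonzero by (intro sum.cong) (simp_all add: I_def L_def monic_crit_syz_times_coeff)
  also have "\<dots> = (if i \<in> I then (if u = L then - c k else 0) else 0) +
      (if k \<in> I then (if u = L then c k else 0) else 0)"
    unfolding sum.distrib by (simp add: I_def)
  also have "\<dots> = 0"
    using ik tdvd_tlcm1 tdvd_tlcm2 by (auto simp: I_def L_def)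
  finally show "(\<Sum>j\<in>I. monic_crit_syz t c i k (tquot u (t j), j) * c j) = 0" .
qed

lemma LT_monic_crit_syz:
  assumes "i < k" "gam i = gam k" "c k \<noteq> 0"
  shows "LT (tau_le le t gam) (monic_crit_syz t c i k) = (tij t k i, k)"
proof (rule LT_eqI)
  have "lift_term t gam (tij t i k, i) = lift_term t gam (tij t k i, k)"
    using assms(2) by (simp add: lift_term_def tmul_tij tlcm_commute)
  then have below: "tau_le le t gam (tij t i k, i) (tij t k i, k)"
    and not_above: "\<not> tau_le le t gam (tij t k i, k) (tij t i k, i)"
    using assms(1) by (simp_all add: tau_le_iff)
  fix w
  assume "monic_crit_syz t c i k w \<noteq> 0"
  then have "w = (tij t i k, i) \<or> w = (tij t k i, k)"
    by (rule monic_crit_syz_nonzeroD)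
  then show "tau_le le t gam w (tij t k i, k)"
    and "tau_le le t gam (tij t k i, k) w \<Longrightarrow> w = (tij t k i, k)"
    using below not_above tau_le_refl by auto
qed (use assms in \<open>simp add: monic_crit_syz_lead_coeff\<close>)

lemma LC_monic_crit_syz:
  "i < k \<Longrightarrow> gam i = gam k \<Longrightarrow> c k \<noteq> 0 \<Longrightarrow> LC (tau_le le t gam) (monic_crit_syz t c i k) = 1"
  by (simp add: LC_def LT_monic_crit_syz monic_crit_syz_lead_coeff)

lemma Sigma2_D:
  "(i, k) \<in> Sigma2 s t gam \<Longrightarrow>
    1 \<le> i \<and> i < k \<and> k \<le> s \<and> gam i = gam k \<and> \<not> rule1_del t gam i k \<and> \<not> rule2_del t gam i k"
  by (simp add: Sigma2_def Sigma1_def Sigma0_def)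

(* Among the i' with t_ki' | t_ki, one that is minimal for the lexicographic order
   on (t_ki', i') is deleted by neither rule. *)
lemma Sigma2_exists_tdvd:
  assumes "1 \<le> i" "i < k" "k \<le> s" "gam i = gam k"
  shows "\<exists>i'. (i', k) \<in> Sigma2 s t gam \<and> tdvd (tij t k i') (tij t k i)"
proof -
  define J where "J = {j \<in> {1..<k}. gam j = gam k \<and> tij t k j \<le> tij t k i}"
  define key where "key j = (tij t k j, j)" for j
  have "finite (key ` J)" "key ` J \<noteq> {}"
    using assms by (auto simp: J_def)
  then obtain i' where i': "i' \<in> J" and minimal: "\<forall>j\<in>J. key j \<le> key i' \<longrightarrow> key i' = key j"
    using finite_has_minimal[of "key ` J"] by blast
  have no_smaller: "key j \<le> key i' \<Longrightarrow> j = i'"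
    if "j \<in> {1..<k}" "gam j = gam k" "tij t k j \<le> tij t k i'" for j
  proof -
    have "j \<in> J" using that i' by (auto simp: J_def)
    then show "key j \<le> key i' \<Longrightarrow> j = i'" using minimal by (metis key_def snd_conv)
  qed
  have "\<not> rule1_del t gam i' k"
  proof
    assume "rule1_del t gam i' k"
    then obtain j where j: "j \<in> {1..<i'}" "gam j = gam k" "tij t k j \<le> tij t k i'"
      unfolding rule1_del_def tdvd_iff_le by blast
    moreover have "i' < k" using i' by (simp add: J_def)
    ultimately show False using no_smaller[of j] by (auto simp: key_def)
  qed
  moreover have "\<not> rule2_del t gam i' k"
  proof
    assume "rule2_del t gam i' k"
    then obtain j where j: "j \<in> {i'<..<k}" "gam j = gam k" "tij t k j < tij t k i'"
      unfolding rule2_del_def tdvd_iff_le by (auto simp: less_le)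
    moreover have "1 \<le> i'" using i' by (simp add: J_def)
    ultimately show False using no_smaller[of j] by (auto simp: key_def less_imp_le)
  qed
  ultimately show ?thesis
    using i' assms unfolding Sigma2_def Sigma1_def Sigma0_def J_def tdvd_iff_le by auto
qed

lemma Sigma2_not_tdvd:
  assumes ik: "(i, k) \<in> Sigma2 s t gam" and i'k: "(i', k) \<in> Sigma2 s t gam" and "i' \<noteq> i"
  shows "\<not> tdvd (tij t k i') (tij t k i)"
proof
  assume dvd: "tdvd (tij t k i') (tij t k i)"
  note i = Sigma2_D[OF ik] and i' = Sigma2_D[OF i'k]
  consider "i' < i" | "i < i'" "tij t k i' = tij t k i" | "i < i'" "tij t k i' \<noteq> tij t k i"
    using \<open>i' \<noteq> i\<close> by linarith
  then show False
  proof cases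
    case 1
    then have "rule1_del t gam i k" using i i' dvd unfolding rule1_del_def by auto
    with i show False by blast
  next
    case 2
    then have "rule1_del t gam i' k" using i i' unfolding rule1_del_def tdvd_def by auto
    with i' show False by blast
  next
    case 3
    then have "rule2_del t gam i k" using i i' dvd unfolding rule2_del_def by auto
    with i show False by blast
  qed
qed

locale schreyer_ordering =
  fixes n r s :: nat
    and le :: "mterm \<Rightarrow> mterm \<Rightarrow> bool"
    and t :: "nat \<Rightarrow> nat \<Rightarrow> nat"
    and gam :: "nat \<Rightarrow> nat"
  assumes ordering: "module_term_ordering n r le"
    and valid_t: "\<And>i. i \<in> {1..s} \<Longrightarrow> valid_term n (t i)"
    and gam_range: "\<And>i. i \<in> {1..s} \<Longrightarrow> gam i \<in> {1..r}"
begin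

abbreviation tau :: "mterm \<Rightarrow> mterm \<Rightarrow> bool" where
  "tau \<equiv> tau_le le t gam"

abbreviation lift :: "mterm \<Rightarrow> mterm" where
  "lift \<equiv> lift_term t gam"

lemma lift_in_mterms: "a \<in> mterms n s \<Longrightarrow> lift a \<in> mterms n r"
  using valid_t gam_range by (auto simp: mterms_def lift_term_def intro: valid_term_tmul)

lemma ordering_antisym: "A \<in> mterms n r \<Longrightarrow> B \<in> mterms n r \<Longrightarrow> le A B \<Longrightarrow> le B A \<Longrightarrow> A = B"
  using ordering unfolding module_term_ordering_def by blast

lemma ordering_trans: "A \<in> mterms n r \<Longrightarrow> B \<in> mterms n r \<Longrightarrow> C \<in> mterms n r \<Longrightarrow> le A B \<Longrightarrow> le B C \<Longrightarrow> le A C"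
  using ordering unfolding module_term_ordering_def by blast

lemma ordering_total: "A \<in> mterms n r \<Longrightarrow> B \<in> mterms n r \<Longrightarrow> le A B \<or> le B A"
  using ordering unfolding module_term_ordering_def by blast

lemma tau_antisym:
  assumes "a \<in> mterms n s" "b \<in> mterms n s" "tau a b" "tau b a"
  shows "a = b"
proof -
  have "lift a = lift b"
  proof (rule ccontr)
    assume "lift a \<noteq> lift b"
    then have "le (lift a) (lift b)" "le (lift b) (lift a)"
      using assms(3,4) unfolding tau_le_iff by auto
    then show False
      using ordering_antisym[OF lift_in_mterms lift_in_mterms] assms(1,2) \<open>lift a \<noteq> lift b\<close> by blast
  qed
  moreover from this have "snd a = snd b"
    using assms(3,4) unfolding tau_le_iff by auto
  ultimately show ?thesis by (rule lift_term_eq_imp_eq)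
qed

lemma tau_trans:
  assumes "a \<in> mterms n s" "b \<in> mterms n s" "c \<in> mterms n s" "tau a b" "tau b c"
  shows "tau a c"
proof -
  have lifts: "lift a \<in> mterms n r" "lift b \<in> mterms n r" "lift c \<in> mterms n r"
    using assms(1-3) by (simp_all add: lift_in_mterms)
  have strict: "le (lift a) (lift c) \<and> lift a \<noteq> lift c"
    if "le (lift a) (lift b)" "lift a \<noteq> lift b" "le (lift b) (lift c)"
  proof
    show "le (lift a) (lift c)" using that ordering_trans[OF lifts] by blast
    show "lift a \<noteq> lift c"
    proof
      assume "lift a = lift c"
      then have "le (lift b) (lift a)" using that(3) by simp
      then show False using that(1,2) ordering_antisym[OF lifts(1,2)] by blast
    qed
  qed
  from assms(4,5) strict show ?thesis
    unfolding tau_le_iff by auto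
qed

lemma tau_total:
  assumes "a \<in> mterms n s" "b \<in> mterms n s"
  shows "tau a b \<or> tau b a"
proof (cases "lift a = lift b")
  case True
  then show ?thesis unfolding tau_le_iff by (simp add: nat_le_linear)
next
  case False
  then show ?thesis
    using ordering_total[OF lift_in_mterms[OF assms(1)] lift_in_mterms[OF assms(2)]]
    unfolding tau_le_iff by auto
qed

lemma LT_in_Fprime:
  assumes "in_Fprime n s m" "m \<noteq> (\<lambda>_. 0)"
  shows "m (LT tau m) \<noteq> 0" and "m w \<noteq> 0 \<Longrightarrow> tau w (LT tau m)"
proof -
  define S where "S = {v. m v \<noteq> 0}"
  have S: "finite S" "S \<noteq> {}" "S \<subseteq> mterms n s"
    using assms unfolding S_def in_Fprime_def mterms_def by auto
  let ?less = "\<lambda>a b. tau a b \<and> a \<noteq> b"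
  have "asymp_on S ?less"
    using S(3) tau_antisym unfolding asymp_on_def by blast
  moreover have "transp_on S ?less"
    using S(3) tau_antisym tau_trans by (intro transp_onI) blast
  ultimately obtain v where v: "v \<in> S" "\<And>w. w \<in> S \<Longrightarrow> w \<noteq> v \<Longrightarrow> \<not> ?less v w"
    using Finite_Set.bex_max_element[of S ?less] S(1,2) by blast
  have max: "tau w v" if "w \<in> S" for w
    using v that S(3) tau_total[of v w] by (cases "w = v") (auto simp: tau_le_refl)
  have "LT tau m = v"
    by (rule LT_eqI) (use v max S(3) tau_antisym in \<open>auto simp: S_def\<close>)
  then show "m (LT tau m) \<noteq> 0" and "m w \<noteq> 0 \<Longrightarrow> tau w (LT tau m)"
    using v(1) max by (auto simp: S_def)
qed

end

locale schreyer_syzygies = schreyer_ordering +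
  fixes c :: "nat \<Rightarrow> 'a::field"
  assumes c_nonzero: "\<And>i. i \<in> {1..s} \<Longrightarrow> c i \<noteq> 0"
begin

abbreviation syzygies :: "(mterm \<Rightarrow> 'a) set" where
  "syzygies \<equiv> Syz n s t gam c"

lemma LT_syzygy_tdvd:
  assumes m: "m \<in> syzygies" "m \<noteq> (\<lambda>_. 0)" and LT: "LT tau m = (u, k)"
  shows "\<exists>i. 1 \<le> i \<and> i < k \<and> gam i = gam k \<and> tdvd (tij t k i) u"
proof -
  have F: "in_Fprime n s m" using m(1) by (simp add: Syz_def)
  have lead: "m (u, k) \<noteq> 0" and max: "\<And>w. m w \<noteq> 0 \<Longrightarrow> tau w (u, k)"
    using LT_in_Fprime[OF F m(2)] LT by auto
  have k: "k \<in> {1..s}" using F lead by (simp add: in_Fprime_def)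
  define w where "w = tmul u (t k)"
  define I where "I = {i \<in> {1..s}. gam i = gam k \<and> tdvd (t i) w}"
  define f where "f i = m (tquot w (t i), i) * c i" for i
  have "k \<in> I" using k by (simp add: I_def w_def tdvd_tmul_right)
  have "sum f I = 0" using m(1) by (simp add: Syz_def I_def f_def)
  moreover have "f k \<noteq> 0" using lead c_nonzero[OF k] by (simp add: f_def w_def)
  moreover have "sum f I = f k + sum f (I - {k})"
    using \<open>k \<in> I\<close> by (simp add: I_def sum.remove)
  ultimately have "sum f (I - {k}) \<noteq> 0" by (metis add.right_neutral)
  then obtain j where j: "j \<in> I" "j \<noteq> k" "f j \<noteq> 0"
    by (rule sum.not_neutral_contains_not_neutral) blast
  then have dvd: "tdvd (t j) w" and "gam j = gam k" "1 \<le> j" by (auto simp: I_def)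
  have "tau (tquot w (t j), j) (u, k)" using j(3) max by (simp add: f_def)
  moreover have "lift (tquot w (t j), j) = lift (u, k)"
    using \<open>gam j = gam k\<close> tmul_tquot[OF dvd] by (simp add: lift_term_def w_def)
  ultimately have "j < k" using j(2) by (simp add: tau_le_iff)
  then show ?thesis
    using dvd \<open>gam j = gam k\<close> \<open>1 \<le> j\<close> by (auto simp: w_def tdvd_tmul_iff_tdvd_tij)
qed

abbreviation crit_basis :: "(mterm \<Rightarrow> 'a) set" where
  "crit_basis \<equiv> (\<lambda>(i, k). monic_crit_syz t c i k) ` Sigma2 s t gam"

lemma LT_crit_basis:
  assumes "(i, k) \<in> Sigma2 s t gam"
  shows "LT tau (monic_crit_syz t c i k) = (tij t k i, k)"
proof -
  from Sigma2_D[OF assms] have "i < k" "gam i = gam k" "k \<in> {1..s}" by auto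
  then show ?thesis using c_nonzero by (simp add: LT_monic_crit_syz)
qed

lemma LC_crit_basis: "g \<in> crit_basis \<Longrightarrow> LC tau g = 1"
proof -
  assume "g \<in> crit_basis"
  then obtain i k where ik: "(i, k) \<in> Sigma2 s t gam" and g: "g = monic_crit_syz t c i k"
    by auto
  from Sigma2_D[OF ik] have "i < k" "gam i = gam k" "k \<in> {1..s}" by auto
  then show ?thesis using g c_nonzero by (simp add: LC_monic_crit_syz)
qed

lemma is_GB_crit_basis: "is_GB tau syzygies crit_basis"
  unfolding is_GB_def
proof (intro conjI subsetI ballI impI)
  have "Sigma2 s t gam \<subseteq> {1..s} \<times> {1..s}"
    by (auto dest!: Sigma2_D)
  then show "finite crit_basis"
    by (metis finite_SigmaI finite_atLeastAtMost finite_imageI finite_subset)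
next
  fix g assume "g \<in> crit_basis"
  then obtain i k where ik: "(i, k) \<in> Sigma2 s t gam" and g: "g = monic_crit_syz t c i k"
    by auto
  have ik': "1 \<le> i" "i < k" "k \<le> s" "gam i = gam k" using Sigma2_D[OF ik] by auto
  then show "g \<in> syzygies"
    using g valid_t c_nonzero by (simp add: monic_crit_syz_in_Syz)
  have "g (tij t k i, k) = 1"
    using g ik' c_nonzero[of k] by (simp add: monic_crit_syz_lead_coeff)
  then show "g \<noteq> (\<lambda>_. 0)" by auto
next
  fix m assume m: "m \<in> syzygies" "m \<noteq> (\<lambda>_. 0)"
  obtain u k where LT: "LT tau m = (u, k)" by fastforce
  obtain i where i: "1 \<le> i" "i < k" "gam i = gam k" "tdvd (tij t k i) u"
    using LT_syzygy_tdvd[OF m LT] by blast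
  have "m (u, k) \<noteq> 0"
    using LT_in_Fprime(1)[OF _ m(2)] m(1) LT by (simp add: Syz_def)
  then have "k \<le> s" using m(1) by (simp add: Syz_def in_Fprime_def)
  then obtain i' where i': "(i', k) \<in> Sigma2 s t gam" "tdvd (tij t k i') (tij t k i)"
    using Sigma2_exists_tdvd i by blast
  then have "mdvd (LT tau (monic_crit_syz t c i' k)) (LT tau m)"
    using i(4) by (simp add: LT_crit_basis LT mdvd_def tdvd_iff_le)
  with i'(1) show "\<exists>g\<in>crit_basis. mdvd (LT tau g) (LT tau m)" by force
qed

lemma crit_basis_LT_not_mdvd:
  assumes "g \<in> crit_basis" "g' \<in> crit_basis" "g \<noteq> g'"
  shows "\<not> mdvd (LT tau g') (LT tau g)"
proof
  obtain i k where ik: "(i, k) \<in> Sigma2 s t gam" and g: "g = monic_crit_syz t c i k"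
    using assms(1) by auto
  obtain i' k' where i'k': "(i', k') \<in> Sigma2 s t gam" and g': "g' = monic_crit_syz t c i' k'"
    using assms(2) by auto
  assume "mdvd (LT tau g') (LT tau g)"
  then have "k' = k" and "tdvd (tij t k i') (tij t k i)"
    by (auto simp: g g' LT_crit_basis[OF ik] LT_crit_basis[OF i'k'] mdvd_def)
  moreover have "i' \<noteq> i" using assms(3) g g' \<open>k' = k\<close> by blast
  ultimately show False using Sigma2_not_tdvd ik i'k' by blast
qed

lemma crit_basis_tail_not_in_LT_module:
  assumes "g \<in> crit_basis" "g v \<noteq> 0" "v \<noteq> LT tau g"
  shows "\<not> in_LT_module tau syzygies v"
proof
  obtain i k where ik: "(i, k) \<in> Sigma2 s t gam" and g: "g = monic_crit_syz t c i k"
    using assms(1) by auto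
  have v: "v = (tij t i k, i)"
    using monic_crit_syz_nonzeroD[of t c i k v] assms(2,3) by (auto simp: g LT_crit_basis[OF ik])
  assume "in_LT_module tau syzygies v"
  then obtain m where m: "m \<in> syzygies" "m \<noteq> (\<lambda>_. 0)" and "mdvd (LT tau m) v"
    by (auto simp: in_LT_module_def)
  then obtain u where LT: "LT tau m = (u, i)" and "tdvd u (tij t i k)"
    by (cases "LT tau m") (simp add: mdvd_def v)
  obtain j where j: "1 \<le> j" "j < i" "gam j = gam i" "tdvd (tij t i j) u"
    using LT_syzygy_tdvd[OF m LT] by blast
  then have "tdvd (tij t i j) (tij t i k)"
    using \<open>tdvd u (tij t i k)\<close> by (auto simp: tdvd_iff_le)
  then have "tdvd (tij t k j) (tij t k i)"
    by (simp add: tdvd_tij_iff tlcm_commute)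
  then have "rule1_del t gam i k"
    using j Sigma2_D[OF ik] by (auto simp: rule1_del_def)
  then show False using Sigma2_D[OF ik] by blast
qed

end

theorem proposition4p5:
  fixes n r s :: nat
    and le :: "mterm \<Rightarrow> mterm \<Rightarrow> bool"
    and t :: "nat \<Rightarrow> nat \<Rightarrow> nat"
    and gam :: "nat \<Rightarrow> nat"
    and c :: "nat \<Rightarrow> 'a::field"
  assumes "module_term_ordering n r le"
    and "\<forall>i\<in>{1..s}. valid_term n (t i)"
    and "\<forall>i\<in>{1..s}. gam i \<in> {1..r}"
    and "\<forall>i\<in>{1..s}. c i \<noteq> 0"
  shows "is_reduced_GB (tau_le le t gam) (Syz n s t gam c)
           ((\<lambda>(i, j). (\<lambda>v. - c j * crit_syz t c i j v)) ` Sigma2 s t gam)"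
proof -
  interpret schreyer_syzygies n r s le t gam c
    using assms by unfold_locales auto
  have basis: "(\<lambda>(i, j). (\<lambda>v. - c j * crit_syz t c i j v)) ` Sigma2 s t gam = crit_basis"
    by (simp add: monic_crit_syz_def)
  show ?thesis
    unfolding is_reduced_GB_def basis
    using is_GB_crit_basis LC_crit_basis crit_basis_LT_not_mdvd crit_basis_tail_not_in_LT_module by blast
qed

end
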